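(* Let $G=(V,E)$ be a (possibly infinite) directed graph of bounded degree (self-loops allowed), let $N\ge2$, and let $w_i:V\to[0,\infty)$, $1\le i\le N$, be weights. Suppose that for every $A\subset V$ and every $1\le i<N$, \[ \sum_{a\in A}w_i(a)\le\sum_{b\in N^+(A)}w_{i+1}(b), \] and that $\sum_{v\in V}w_1(v)=\sum_{v\in V}w_N(v)<\infty$. Then there exists a weighting $\alpha:\mathcal{P}_N\to[0,\infty)$ such that for every $1\le i\le N$ and $v\in V$, \[ w_i(v)=\sum_{p\in\mathcal{P}_N:\,p(i)=v}\alpha(p). \]
   Context: $N^+(A)=\{v\in V:(a,v)\in E\text{ for some }a\in A\}$. A path of length $N$ is a sequence $p=(p(1),\dots,p(N))$ of vertices with $(p(i),p(i+1))\in E$ for $1\le i<N$; $\mathcal{P}_N$ is the set of all such paths. *)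

theory Defs
  imports "HOL-Analysis.Analysis"
begin

definition out_nbhd :: "('v \<times> 'v) set \<Rightarrow> 'v set \<Rightarrow> 'v set" where
  "out_nbhd E A = {v. \<exists>a\<in>A. (a, v) \<in> E}"

definition bounded_degree :: "('v \<times> 'v) set \<Rightarrow> bool" where
  "bounded_degree E \<longleftrightarrow> (\<exists>d::nat. \<forall>v.
     finite {u. (v, u) \<in> E} \<and> card {u. (v, u) \<in> E} \<le> d \<and>
     finite {u. (u, v) \<in> E} \<and> card {u. (u, v) \<in> E} \<le> d)"

text \<open>Paths of length N, as lists; the paper's p(i) is p ! (i - 1).\<close>
definition paths :: "('v \<times> 'v) set \<Rightarrow> nat \<Rightarrow> 'v list set" where
  "paths E N = {p. length p = N \<and> (\<forall>i. Suc i < N \<longrightarrow> (p ! i, p ! Suc i) \<in> E)}"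

end

theory Submission
  imports Defs
begin

(*
  For each 1 <= i < N, Hall's condition together with equal finite total mass yields a
  coupling pi_i of w_i and w_(i+1) supported on the edges.  With finitely many sources
  this is the supply-demand form of Hall's theorem, proved by induction on the number of
  edges: push as much mass as possible along one edge, and if a set of sources becomes
  tight, split the instance there.  For a locally finite graph, compactness of the product
  of the intervals [0, w_i(a)] removes the finiteness, and equality of the total masses
  turns the demand inequalities into equalities.  The couplings are then glued like the
  transition kernels of a Markov chain:
    alpha(p) = w_1(p_1) * prod_i pi_i(p_i, p_(i+1)) / w_i(p_i).
*)

section \<open>Supply--demand form of Hall's theorem\<close>

definition hall_condition ::
    "('a \<times> 'b) set \<Rightarrow> 'a set \<Rightarrow> ('a \<Rightarrow> real) \<Rightarrow> ('b \<Rightarrow> real) \<Rightarrow> bool" where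
  "hall_condition E F \<mu> \<nu> \<longleftrightarrow> (\<forall>S\<subseteq>F. sum \<mu> S \<le> sum \<nu> (E `` S))"

definition supply_plan ::
    "('a \<times> 'b) set \<Rightarrow> 'a set \<Rightarrow> ('a \<Rightarrow> real) \<Rightarrow> ('b \<Rightarrow> real) \<Rightarrow> ('a \<times> 'b \<Rightarrow> real) \<Rightarrow> bool" where
  "supply_plan E F \<mu> \<nu> \<pi> \<longleftrightarrow> (\<forall>e. 0 \<le> \<pi> e) \<and> (\<forall>e. e \<notin> E \<longrightarrow> \<pi> e = 0) \<and>
     (\<forall>a\<in>F. (\<Sum>b\<in>E `` {a}. \<pi> (a, b)) = \<mu> a) \<and> (\<forall>b. (\<Sum>a\<in>F. \<pi> (a, b)) \<le> \<nu> b)"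

lemma sum_fun_upd:
  fixes f :: "'a \<Rightarrow> 'b::ab_group_add"
  assumes "finite S"
  shows "sum (f(x := y)) S = sum f S + (if x \<in> S then y - f x else 0)"
proof -
  have "sum (f(x := y)) S = sum f S + sum ((\<lambda>_. 0)(x := y - f x)) S"
    by (subst sum.distrib[symmetric]) (rule sum.cong, auto)
  also have "sum ((\<lambda>_. 0)(x := y - f x)) S = (if x \<in> S then y - f x else 0)"
    using assms by (simp add: sum.If_cases fun_upd_def)
  finally show ?thesis .
qed

(* Move as much mass t as Hall's condition allows along an edge (a, b): then either an
   endpoint is exhausted or some set avoiding a but reaching b becomes tight. *)
lemma hall_condition_decrement:
  assumes "finite F" "finite E" and hall: "hall_condition E F \<mu> \<nu>"
    and "0 \<le> \<mu> a" "0 \<le> \<nu> b" "a \<in> F"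
  obtains t where "0 \<le> t" "t \<le> \<mu> a" "t \<le> \<nu> b"
    and "hall_condition E F (\<mu>(a := \<mu> a - t)) (\<nu>(b := \<nu> b - t))"
    and "t = \<mu> a \<or> t = \<nu> b \<or> (\<exists>S\<subseteq>F. a \<notin> S \<and> b \<in> E `` S \<and>
           sum (\<mu>(a := \<mu> a - t)) S = sum (\<nu>(b := \<nu> b - t)) (E `` S))"
proof -
  define SS where "SS = {S. S \<subseteq> F \<and> a \<notin> S \<and> b \<in> E `` S}"
  define slack where "slack S = sum \<nu> (E `` S) - sum \<mu> S" for S
  define t where "t = Min (insert (\<mu> a) (insert (\<nu> b) (slack ` SS)))"
  have "SS \<subseteq> Pow F" by (auto simp: SS_def)
  with \<open>finite F\<close> have "finite SS" by (simp add: finite_subset)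
  then have t_le: "t \<le> \<mu> a" "t \<le> \<nu> b" "\<And>S. S \<in> SS \<Longrightarrow> t \<le> slack S"
    unfolding t_def by (auto simp del: Min_insert intro: Min_le)
  from \<open>finite SS\<close> have t_in: "t \<in> insert (\<mu> a) (insert (\<nu> b) (slack ` SS))"
    unfolding t_def by (intro Min_in) auto
  have "0 \<le> slack S" if "S \<in> SS" for S
    using hall that by (auto simp: hall_condition_def SS_def slack_def)
  with \<open>finite SS\<close> assms(4,5) have "0 \<le> t"
    unfolding t_def by (subst Min_ge_iff) auto
  define \<mu>' where "\<mu>' = \<mu>(a := \<mu> a - t)"
  define \<nu>' where "\<nu>' = \<nu>(b := \<nu> b - t)"
  have fin_image: "finite (E `` S)" for S
    using \<open>finite E\<close> by simp
  have "sum \<mu>' S \<le> sum \<nu>' (E `` S)" if S: "S \<subseteq> F" for S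
  proof -
    have "finite S" using S \<open>finite F\<close> finite_subset by blast
    have "sum \<mu> S \<le> sum \<nu> (E `` S)" using hall S by (auto simp: hall_condition_def)
    moreover have "t \<le> slack S" if "a \<notin> S" "b \<in> E `` S"
      using t_le(3) S that by (auto simp: SS_def)
    moreover have "sum \<mu>' S = sum \<mu> S - (if a \<in> S then t else 0)"
      unfolding \<mu>'_def sum_fun_upd[OF \<open>finite S\<close>] by simp
    moreover have "sum \<nu>' (E `` S) = sum \<nu> (E `` S) - (if b \<in> E `` S then t else 0)"
      unfolding \<nu>'_def sum_fun_upd[OF fin_image] by simp
    ultimately show ?thesis
      using \<open>0 \<le> t\<close> unfolding slack_def by (smt (verit))
  qed
  then have "hall_condition E F \<mu>' \<nu>'" by (simp add: hall_condition_def)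
  moreover have "t = \<mu> a \<or> t = \<nu> b \<or> (\<exists>S\<subseteq>F. a \<notin> S \<and> b \<in> E `` S \<and> sum \<mu>' S = sum \<nu>' (E `` S))"
  proof -
    { fix S assume "S \<in> SS" "t = slack S"
      moreover from \<open>S \<in> SS\<close> have "finite S" using \<open>finite F\<close> finite_subset by (auto simp: SS_def)
      ultimately have "sum \<mu>' S = sum \<nu>' (E `` S)"
        unfolding \<mu>'_def \<nu>'_def sum_fun_upd[OF \<open>finite S\<close>] sum_fun_upd[OF fin_image]
        by (auto simp: SS_def slack_def) }
    with t_in show ?thesis by (auto simp: SS_def)
  qed
  ultimately show ?thesis
    using that \<open>0 \<le> t\<close> t_le by (simp add: \<mu>'_def \<nu>'_def)
qed

lemma hall_condition_remove_edge:
  assumes "finite F" "finite E" "hall_condition E F \<mu> \<nu>" "\<forall>y. 0 \<le> \<nu> y"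
    and "\<mu> a = 0 \<or> \<nu> b = 0"
  shows "hall_condition (E - {(a, b)}) F \<mu> \<nu>"
  unfolding hall_condition_def
proof (intro allI impI)
  fix S assume S: "S \<subseteq> F"
  have fin: "finite S" "finite (E `` S)" "finite ((E - {(a, b)}) `` S)"
    using S assms(1,2) finite_subset by auto
  have hall_at: "sum \<mu> S' \<le> sum \<nu> (E `` S')" if "S' \<subseteq> F" for S'
    using assms(3) that by (simp add: hall_condition_def)
  from assms(5) show "sum \<mu> S \<le> sum \<nu> ((E - {(a, b)}) `` S)"
  proof
    assume "\<mu> a = 0"
    then have "sum \<mu> S = sum \<mu> (S - {a})" using fin by (simp add: sum_diff1)
    also have "\<dots> \<le> sum \<nu> (E `` (S - {a}))" using hall_at S by blast
    also have "\<dots> \<le> sum \<nu> ((E - {(a, b)}) `` S)"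
      using fin assms(4) by (intro sum_mono2) auto
    finally show ?thesis .
  next
    assume "\<nu> b = 0"
    have "sum \<mu> S \<le> sum \<nu> (E `` S)" using hall_at S by blast
    also have "\<dots> = sum \<nu> (E `` S - {b})" using \<open>\<nu> b = 0\<close> fin by (simp add: sum_diff1)
    also have "\<dots> \<le> sum \<nu> ((E - {(a, b)}) `` S)"
      using fin assms(4) by (intro sum_mono2) auto
    finally show ?thesis .
  qed
qed

lemma hall_condition_restrict:
  assumes "hall_condition E F \<mu> \<nu>" "S0 \<subseteq> F"
  shows "hall_condition {e \<in> E. fst e \<in> S0} S0 \<mu> \<nu>"
proof -
  have "{e \<in> E. fst e \<in> S0} `` S = E `` S" if "S \<subseteq> S0" for S
    using that by fastforce
  with assms show ?thesis by (auto simp: hall_condition_def)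
qed

lemma hall_condition_contract:
  assumes "finite F" "finite E" "hall_condition E F \<mu> \<nu>" "S0 \<subseteq> F"
    and tight: "sum \<mu> S0 = sum \<nu> (E `` S0)"
  shows "hall_condition {e \<in> E. fst e \<notin> S0 \<and> snd e \<notin> E `` S0} (F - S0) \<mu> \<nu>"
  unfolding hall_condition_def
proof (intro allI impI)
  fix S assume S: "S \<subseteq> F - S0"
  have fin: "finite S" "finite S0" "\<And>S. finite (E `` S)"
    using S assms(1,2,4) by (auto intro: finite_subset)
  have "sum \<mu> S + sum \<mu> S0 = sum \<mu> (S \<union> S0)"
    using S fin by (intro sum.union_disjoint[symmetric]) auto
  also have "\<dots> \<le> sum \<nu> (E `` (S \<union> S0))"
    using assms(3,4) S unfolding hall_condition_def by blast
  also have "E `` (S \<union> S0) = (E `` S - E `` S0) \<union> E `` S0" by auto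
  also have "sum \<nu> \<dots> = sum \<nu> (E `` S - E `` S0) + sum \<nu> (E `` S0)"
    using fin by (intro sum.union_disjoint) auto
  also have "E `` S - E `` S0 = {e \<in> E. fst e \<notin> S0 \<and> snd e \<notin> E `` S0} `` S"
    using S unfolding Image_def by auto
  finally show "sum \<mu> S \<le> sum \<nu> ({e \<in> E. fst e \<notin> S0 \<and> snd e \<notin> E `` S0} `` S)"
    using tight by simp
qed

lemma supply_plan_union:
  assumes \<pi>1: "supply_plan E1 F1 \<mu> \<nu> \<pi>1" and \<pi>2: "supply_plan E2 F2 \<mu> \<nu> \<pi>2"
    and "finite E1" "finite E2" "finite F1" "finite F2" "F1 \<inter> F2 = {}"
    and E1: "E1 \<subseteq> F1 \<times> T" and E2: "E2 \<subseteq> F2 \<times> - T"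
  shows "supply_plan (E1 \<union> E2) (F1 \<union> F2) \<mu> \<nu> (\<lambda>e. \<pi>1 e + \<pi>2 e)"
proof -
  have zero1: "\<pi>1 (x, y) = 0" if "x \<notin> F1 \<or> y \<notin> T" for x y
    using \<pi>1 E1 that unfolding supply_plan_def by blast
  have zero2: "\<pi>2 (x, y) = 0" if "x \<notin> F2 \<or> y \<in> T" for x y
    using \<pi>2 E2 that unfolding supply_plan_def by blast
  note zero = zero1[OF disjI1] zero1[OF disjI2] zero2[OF disjI1] zero2[OF disjI2]
  have row: "(\<Sum>b\<in>(E1 \<union> E2) `` {a}. \<pi>1 (a, b) + \<pi>2 (a, b)) = \<mu> a" if "a \<in> F1 \<union> F2" for a
  proof (cases "a \<in> F1")
    case True
    then have "(E1 \<union> E2) `` {a} = E1 `` {a}" "a \<notin> F2" using E2 \<open>F1 \<inter> F2 = {}\<close> by auto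
    then show ?thesis using \<pi>1 True zero by (simp add: sum.distrib supply_plan_def)
  next
    case False
    then have "(E1 \<union> E2) `` {a} = E2 `` {a}" "a \<in> F2" using E1 that by auto
    then show ?thesis using \<pi>2 False zero by (simp add: sum.distrib supply_plan_def)
  qed
  have col: "(\<Sum>a\<in>F1 \<union> F2. \<pi>1 (a, b) + \<pi>2 (a, b)) \<le> \<nu> b" for b
  proof -
    have "(\<Sum>a\<in>F2. \<pi>1 (a, b)) = 0" "(\<Sum>a\<in>F1. \<pi>2 (a, b)) = 0"
      using zero(1,3) \<open>F1 \<inter> F2 = {}\<close> by (blast intro: sum.neutral)+
    then have "(\<Sum>a\<in>F1 \<union> F2. \<pi>1 (a, b) + \<pi>2 (a, b)) = (\<Sum>a\<in>F1. \<pi>1 (a, b)) + (\<Sum>a\<in>F2. \<pi>2 (a, b))"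
      using assms(5-7) by (simp add: sum.distrib sum.union_disjoint)
    then show ?thesis
      using \<pi>1 \<pi>2 zero by (cases "b \<in> T") (auto simp: supply_plan_def)
  qed
  show ?thesis
    using \<pi>1 \<pi>2 row col by (auto simp: supply_plan_def)
qed

lemma supply_plan_mono_edges:
  assumes \<pi>: "supply_plan E' F \<mu> \<nu> \<pi>" and "E' \<subseteq> E" "finite E"
  shows "supply_plan E F \<mu> \<nu> \<pi>"
proof -
  have "(\<Sum>y\<in>E `` {x}. \<pi> (x, y)) = (\<Sum>y\<in>E' `` {x}. \<pi> (x, y))" for x
    using assms \<pi> unfolding supply_plan_def by (intro sum.mono_neutral_right) auto
  then have "\<forall>x\<in>F. (\<Sum>y\<in>E `` {x}. \<pi> (x, y)) = \<mu> x"
    using \<pi> by (simp add: supply_plan_def)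
  with \<pi> \<open>E' \<subseteq> E\<close> show ?thesis
    unfolding supply_plan_def by blast
qed

lemma supply_plan_split:
  assumes \<pi>1: "supply_plan {e \<in> E. fst e \<in> S} S \<mu> \<nu> \<pi>1"
    and \<pi>2: "supply_plan {e \<in> E. fst e \<notin> S \<and> snd e \<notin> E `` S} (F - S) \<mu> \<nu> \<pi>2"
    and "finite E" "finite F" "E \<subseteq> F \<times> UNIV" "S \<subseteq> F"
  shows "supply_plan E F \<mu> \<nu> (\<lambda>e. \<pi>1 e + \<pi>2 e)"
proof -
  have "supply_plan ({e \<in> E. fst e \<in> S} \<union> {e \<in> E. fst e \<notin> S \<and> snd e \<notin> E `` S}) (S \<union> (F - S)) \<mu> \<nu>
      (\<lambda>e. \<pi>1 e + \<pi>2 e)"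
    using assms(3-6) by (intro supply_plan_union[OF \<pi>1 \<pi>2, where T = "E `` S"]) (auto intro: finite_subset)
  moreover have "S \<union> (F - S) = F" using \<open>S \<subseteq> F\<close> by blast
  ultimately show ?thesis
    using \<open>finite E\<close> by (auto intro: supply_plan_mono_edges)
qed

lemma supply_plan_add_edge:
  assumes \<pi>: "supply_plan E F (\<mu>(a := \<mu> a - t)) (\<nu>(b := \<nu> b - t)) \<pi>"
    and "(a, b) \<in> E" "a \<in> F" "0 \<le> t" "finite E" "finite F"
  shows "supply_plan E F \<mu> \<nu> (\<lambda>e. \<pi> e + (if e = (a, b) then t else 0))"
proof -
  have row: "(\<Sum>y\<in>E `` {x}. \<pi> (x, y) + (if (x, y) = (a, b) then t else 0)) = \<mu> x" if "x \<in> F" for x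
    using \<pi> that \<open>finite E\<close> \<open>(a, b) \<in> E\<close> by (simp add: sum.distrib supply_plan_def)
  have col: "(\<Sum>x\<in>F. \<pi> (x, y) + (if (x, y) = (a, b) then t else 0)) \<le> \<nu> y" for y
  proof -
    have "(\<Sum>x\<in>F. if (x, y) = (a, b) then t else 0) = (if y = b then t else 0)"
      using \<open>finite F\<close> \<open>a \<in> F\<close> by (cases "y = b") auto
    moreover have "(\<Sum>x\<in>F. \<pi> (x, y)) \<le> (\<nu>(b := \<nu> b - t)) y"
      using \<pi> unfolding supply_plan_def by blast
    ultimately show ?thesis by (simp add: sum.distrib split: if_splits)
  qed
  have "0 \<le> \<pi> e" "e \<notin> E \<Longrightarrow> \<pi> e = 0" for e
    using \<pi> unfolding supply_plan_def by blast+
  with row col \<open>0 \<le> t\<close> \<open>(a, b) \<in> E\<close> show ?thesis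
    unfolding supply_plan_def by auto
qed

lemma supply_plan_from_tight_set:
  assumes "finite E" "finite F" "E \<subseteq> F \<times> UNIV" "\<forall>x\<in>F. 0 \<le> \<mu> x"
    and hall: "hall_condition E F \<mu> \<nu>" and "S \<subseteq> F" and tight: "sum \<mu> S = sum \<nu> (E `` S)"
    and "(a, b) \<in> E" "a \<notin> S" "b \<in> E `` S"
    and smaller: "\<And>E' F'. E' \<subset> E \<Longrightarrow> F' \<subseteq> F \<Longrightarrow> E' \<subseteq> F' \<times> UNIV \<Longrightarrow> hall_condition E' F' \<mu> \<nu> \<Longrightarrow>
                 \<exists>\<pi>. supply_plan E' F' \<mu> \<nu> \<pi>"
  shows "\<exists>\<pi>. supply_plan E F \<mu> \<nu> \<pi>"
proof -
  define E1 where "E1 = {e \<in> E. fst e \<in> S}"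
  define E2 where "E2 = {e \<in> E. fst e \<notin> S \<and> snd e \<notin> E `` S}"
  obtain a0 where "a0 \<in> S" "(a0, b) \<in> E" using \<open>b \<in> E `` S\<close> by blast
  have "E1 \<subseteq> E" "(a, b) \<notin> E1" "E2 \<subseteq> E" "(a0, b) \<notin> E2"
    using \<open>a \<notin> S\<close> \<open>a0 \<in> S\<close> by (auto simp: E1_def E2_def)
  with \<open>(a, b) \<in> E\<close> \<open>(a0, b) \<in> E\<close> have "E1 \<subset> E" "E2 \<subset> E" by blast+
  moreover have "E1 \<subseteq> S \<times> UNIV" "E2 \<subseteq> (F - S) \<times> UNIV"
    using assms(3) by (auto simp: E1_def E2_def)
  moreover have "hall_condition E1 S \<mu> \<nu>" "hall_condition E2 (F - S) \<mu> \<nu>"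
    unfolding E1_def E2_def using assms(1,2) hall \<open>S \<subseteq> F\<close> tight
    by (auto intro: hall_condition_restrict hall_condition_contract)
  ultimately obtain \<pi>1 \<pi>2 where "supply_plan E1 S \<mu> \<nu> \<pi>1" "supply_plan E2 (F - S) \<mu> \<nu> \<pi>2"
    using smaller \<open>S \<subseteq> F\<close> by (metis Diff_subset)
  then show ?thesis
    unfolding E1_def E2_def using assms(1-3) \<open>S \<subseteq> F\<close> by (blast intro: supply_plan_split)
qed

lemma supply_plan_by_reduction:
  assumes "finite E" "finite F" "E \<subseteq> F \<times> UNIV" "\<forall>x\<in>F. 0 \<le> \<mu> x" "\<forall>y. 0 \<le> \<nu> y"
    and hall: "hall_condition E F \<mu> \<nu>" and "(a, b) \<in> E"
    and reducible: "\<mu> a = 0 \<or> \<nu> b = 0 \<or> (\<exists>S\<subseteq>F. a \<notin> S \<and> b \<in> E `` S \<and> sum \<mu> S = sum \<nu> (E `` S))"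
    and smaller: "\<And>E' F'. E' \<subset> E \<Longrightarrow> F' \<subseteq> F \<Longrightarrow> E' \<subseteq> F' \<times> UNIV \<Longrightarrow> hall_condition E' F' \<mu> \<nu> \<Longrightarrow>
                 \<exists>\<pi>. supply_plan E' F' \<mu> \<nu> \<pi>"
  shows "\<exists>\<pi>. supply_plan E F \<mu> \<nu> \<pi>"
proof (cases "\<mu> a = 0 \<or> \<nu> b = 0")
  case True
  have "hall_condition (E - {(a, b)}) F \<mu> \<nu>"
    using assms(2,1) hall assms(5) True by (rule hall_condition_remove_edge)
  with \<open>(a, b) \<in> E\<close> assms(3) obtain \<pi> where "supply_plan (E - {(a, b)}) F \<mu> \<nu> \<pi>"
    using smaller[of "E - {(a, b)}" F] by blast
  then show ?thesis using \<open>finite E\<close> by (blast intro: supply_plan_mono_edges)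
next
  case False
  with reducible obtain S where "S \<subseteq> F" "a \<notin> S" "b \<in> E `` S" "sum \<mu> S = sum \<nu> (E `` S)"
    by blast
  with assms(1-4) hall \<open>(a, b) \<in> E\<close> show ?thesis
    by (intro supply_plan_from_tight_set[OF _ _ _ _ _ _ _ _ _ _ smaller]) auto
qed

theorem hall_condition_imp_supply_plan:
  assumes "finite E" "finite F" "E \<subseteq> F \<times> UNIV"
    and "\<forall>x\<in>F. 0 \<le> \<mu> x" "\<forall>y. 0 \<le> \<nu> y" "hall_condition E F \<mu> \<nu>"
  shows "\<exists>\<pi>. supply_plan E F \<mu> \<nu> \<pi>"
  using assms
proof (induction E arbitrary: F \<mu> \<nu> rule: finite_psubset_induct)
  case (psubset E)
  show ?case
  proof (cases "\<forall>x\<in>F. \<mu> x = 0")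
    case True
    then have "supply_plan E F \<mu> \<nu> (\<lambda>_. 0)"
      using psubset.prems by (simp add: supply_plan_def)
    then show ?thesis by blast
  next
    case False
    then obtain a where "a \<in> F" "0 < \<mu> a"
      using psubset.prems(3) by force
    moreover have "sum \<mu> {a} \<le> sum \<nu> (E `` {a})"
      using psubset.prems(5) \<open>a \<in> F\<close> unfolding hall_condition_def by blast
    ultimately have "E `` {a} \<noteq> {}" by auto
    then obtain b where "(a, b) \<in> E" by blast
    obtain t where t: "0 \<le> t" "t \<le> \<mu> a" "t \<le> \<nu> b"
      and hall': "hall_condition E F (\<mu>(a := \<mu> a - t)) (\<nu>(b := \<nu> b - t))"
      and reducible: "t = \<mu> a \<or> t = \<nu> b \<or> (\<exists>S\<subseteq>F. a \<notin> S \<and> b \<in> E `` S \<and>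
           sum (\<mu>(a := \<mu> a - t)) S = sum (\<nu>(b := \<nu> b - t)) (E `` S))"
      using hall_condition_decrement[OF psubset.prems(1) psubset.hyps(1) psubset.prems(5)]
        \<open>a \<in> F\<close> \<open>0 < \<mu> a\<close> psubset.prems(4) by (metis less_imp_le)
    define \<mu>' where "\<mu>' = \<mu>(a := \<mu> a - t)"
    define \<nu>' where "\<nu>' = \<nu>(b := \<nu> b - t)"
    have nonneg: "\<forall>x\<in>F. 0 \<le> \<mu>' x" "\<forall>y. 0 \<le> \<nu>' y"
      using psubset.prems(3,4) t by (auto simp: \<mu>'_def \<nu>'_def)
    have "\<exists>\<pi>. supply_plan E F \<mu>' \<nu>' \<pi>"
    proof (rule supply_plan_by_reduction[OF psubset.hyps(1) psubset.prems(1,2) nonneg])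
      show "hall_condition E F \<mu>' \<nu>'"
        unfolding \<mu>'_def \<nu>'_def by (rule hall')
      show "\<mu>' a = 0 \<or> \<nu>' b = 0 \<or> (\<exists>S\<subseteq>F. a \<notin> S \<and> b \<in> E `` S \<and> sum \<mu>' S = sum \<nu>' (E `` S))"
        using reducible by (auto simp: \<mu>'_def \<nu>'_def)
      show "\<exists>\<pi>. supply_plan E' F' \<mu>' \<nu>' \<pi>"
        if "E' \<subset> E" "F' \<subseteq> F" "E' \<subseteq> F' \<times> UNIV" "hall_condition E' F' \<mu>' \<nu>'" for E' F'
        using psubset.IH[OF that(1) finite_subset[OF that(2) psubset.prems(1)] that(3) _ nonneg(2) that(4)]
          that(2) nonneg(1) by blast
    qed fact
    then obtain \<pi> where "supply_plan E F \<mu>' \<nu>' \<pi>" by blast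
    then have "supply_plan E F \<mu> \<nu> (\<lambda>e. \<pi> e + (if e = (a, b) then t else 0))"
      unfolding \<mu>'_def \<nu>'_def using \<open>(a, b) \<in> E\<close> \<open>a \<in> F\<close> t(1) psubset.hyps(1) psubset.prems(1)
      by (rule supply_plan_add_edge)
    then show ?thesis by blast
  qed
qed


section \<open>Couplings on locally finite digraphs\<close>

definition locally_finite_digraph :: "('v \<times> 'v) set \<Rightarrow> bool" where
  "locally_finite_digraph E \<longleftrightarrow> (\<forall>a. finite {b. (a, b) \<in> E}) \<and> (\<forall>b. finite {a. (a, b) \<in> E})"

definition out_flow :: "('v \<times> 'v) set \<Rightarrow> ('v \<times> 'v \<Rightarrow> real) \<Rightarrow> 'v \<Rightarrow> real" where
  "out_flow E \<pi> a = (\<Sum>b | (a, b) \<in> E. \<pi> (a, b))"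

definition in_flow :: "('v \<times> 'v) set \<Rightarrow> ('v \<times> 'v \<Rightarrow> real) \<Rightarrow> 'v \<Rightarrow> real" where
  "in_flow E \<pi> b = (\<Sum>a | (a, b) \<in> E. \<pi> (a, b))"

definition coupling :: "('v \<times> 'v) set \<Rightarrow> ('v \<Rightarrow> real) \<Rightarrow> ('v \<Rightarrow> real) \<Rightarrow> ('v \<times> 'v \<Rightarrow> real) \<Rightarrow> bool" where
  "coupling E \<mu> \<nu> \<pi> \<longleftrightarrow> (\<forall>e. 0 \<le> \<pi> e) \<and> (\<forall>e. e \<notin> E \<longrightarrow> \<pi> e = 0) \<and>
     out_flow E \<pi> = \<mu> \<and> in_flow E \<pi> = \<nu>"

lemma bounded_degree_imp_locally_finite: "bounded_degree E \<Longrightarrow> locally_finite_digraph E"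
  by (auto simp: bounded_degree_def locally_finite_digraph_def)

lemma finite_out_nbhd:
  assumes "locally_finite_digraph E" "finite A"
  shows "finite (out_nbhd E A)"
proof -
  have "out_nbhd E A = (\<Union>a\<in>A. {b. (a, b) \<in> E})" by (auto simp: out_nbhd_def)
  then show ?thesis using assms by (simp add: locally_finite_digraph_def)
qed

lemma coupling_flows:
  assumes "coupling E \<mu> \<nu> \<pi>"
  shows "out_flow E \<pi> a = \<mu> a" "in_flow E \<pi> b = \<nu> b"
  using assms by (simp_all add: coupling_def)

lemma coupling_nonneg:
  assumes "coupling E \<mu> \<nu> \<pi>"
  shows "0 \<le> \<pi> e" "0 \<le> \<mu> a" "0 \<le> \<nu> b"
proof -
  show "0 \<le> \<pi> e" for e using assms unfolding coupling_def by blast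
  moreover have "\<mu> = out_flow E \<pi>" "\<nu> = in_flow E \<pi>"
    using assms by (simp_all add: coupling_def)
  ultimately show "0 \<le> \<mu> a" "0 \<le> \<nu> b"
    by (simp_all add: out_flow_def in_flow_def sum_nonneg)
qed

lemma coupling_le_out:
  assumes "coupling E \<mu> \<nu> \<pi>" "locally_finite_digraph E"
  shows "\<pi> (x, y) \<le> \<mu> x"
proof (cases "(x, y) \<in> E")
  case True
  then have "\<pi> (x, y) \<le> out_flow E \<pi> x"
    unfolding out_flow_def using assms(2) coupling_nonneg(1)[OF assms(1)]
    by (intro member_le_sum) (auto simp: locally_finite_digraph_def)
  then show ?thesis using assms(1) by (simp add: coupling_def)
next
  case False
  then have "\<pi> (x, y) = 0" using assms(1) unfolding coupling_def by blast
  then show ?thesis using coupling_nonneg(2)[OF assms(1)] by simp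
qed

lemma hall_condition_out_edges:
  assumes lf: "locally_finite_digraph E" and "finite F"
    and \<mu>: "\<forall>a. 0 \<le> \<mu> a" and \<nu>: "\<forall>b. 0 \<le> \<nu> b"
    and hall: "\<forall>A. (\<Sum>\<^sub>\<infinity>a\<in>A. ennreal (\<mu> a)) \<le> (\<Sum>\<^sub>\<infinity>b\<in>out_nbhd E A. ennreal (\<nu> b))"
  shows "hall_condition (SIGMA a:F. {b. (a, b) \<in> E}) F \<mu> \<nu>"
  unfolding hall_condition_def
proof (intro allI impI)
  fix S assume "S \<subseteq> F"
  then have "finite S" "(SIGMA a:F. {b. (a, b) \<in> E}) `` S = out_nbhd E S"
    using \<open>finite F\<close> by (auto simp: out_nbhd_def intro: finite_subset)
  moreover have "(\<Sum>\<^sub>\<infinity>a\<in>S. ennreal (\<mu> a)) \<le> (\<Sum>\<^sub>\<infinity>b\<in>out_nbhd E S. ennreal (\<nu> b))"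
    using hall by blast
  ultimately show "sum \<mu> S \<le> sum \<nu> ((SIGMA a:F. {b. (a, b) \<in> E}) `` S)"
    using finite_out_nbhd[OF lf] \<mu> \<nu> by (simp add: sum_nonneg)
qed

lemma locally_finite_supply_plan:
  assumes lf: "locally_finite_digraph E" and "finite F"
    and \<mu>: "\<forall>a. 0 \<le> \<mu> a" and \<nu>: "\<forall>b. 0 \<le> \<nu> b"
    and hall: "\<forall>A. (\<Sum>\<^sub>\<infinity>a\<in>A. ennreal (\<mu> a)) \<le> (\<Sum>\<^sub>\<infinity>b\<in>out_nbhd E A. ennreal (\<nu> b))"
  shows "\<exists>\<pi>. (\<forall>e. 0 \<le> \<pi> e \<and> \<pi> e \<le> \<mu> (fst e)) \<and> (\<forall>e. e \<notin> E \<longrightarrow> \<pi> e = 0) \<and>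
             (\<forall>a\<in>F. out_flow E \<pi> a = \<mu> a) \<and> (\<forall>b. in_flow E \<pi> b \<le> \<nu> b)"
proof -
  define EF where "EF = (SIGMA a:F. {b. (a, b) \<in> E})"
  have "finite EF"
    using \<open>finite F\<close> lf by (auto simp: EF_def locally_finite_digraph_def)
  have "EF \<subseteq> F \<times> UNIV" by (auto simp: EF_def)
  have "hall_condition EF F \<mu> \<nu>"
    unfolding EF_def using lf \<open>finite F\<close> \<mu> \<nu> hall by (rule hall_condition_out_edges)
  then obtain \<pi> where \<pi>: "supply_plan EF F \<mu> \<nu> \<pi>"
    using hall_condition_imp_supply_plan[OF \<open>finite EF\<close> \<open>finite F\<close> \<open>EF \<subseteq> F \<times> UNIV\<close> _ \<nu>] \<mu>
    by blast
  have nonneg: "0 \<le> \<pi> e" and zero: "e \<notin> EF \<Longrightarrow> \<pi> e = 0" for e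
    using \<pi> unfolding supply_plan_def by blast+
  have out: "out_flow E \<pi> a = \<mu> a" if "a \<in> F" for a
  proof -
    have "(\<Sum>b\<in>EF `` {a}. \<pi> (a, b)) = \<mu> a"
      using \<pi> that unfolding supply_plan_def by blast
    moreover have "EF `` {a} = {b. (a, b) \<in> E}" using that by (auto simp: EF_def)
    ultimately show ?thesis by (simp add: out_flow_def)
  qed
  have le_out: "\<pi> (a, b) \<le> \<mu> a" for a b
  proof (cases "(a, b) \<in> EF")
    case True
    then have "\<pi> (a, b) \<le> out_flow E \<pi> a"
      unfolding out_flow_def using lf nonneg
      by (intro member_le_sum) (auto simp: EF_def locally_finite_digraph_def)
    with True out show ?thesis by (auto simp: EF_def)
  qed (use zero \<mu> in simp)
  have "in_flow E \<pi> b \<le> \<nu> b" for b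
  proof -
    have "in_flow E \<pi> b = (\<Sum>a\<in>F. \<pi> (a, b))"
      unfolding in_flow_def using \<open>finite F\<close> lf zero
      by (intro sum.mono_neutral_cong) (auto simp: EF_def locally_finite_digraph_def)
    then show ?thesis using \<pi> by (simp add: supply_plan_def)
  qed
  then show ?thesis
    using nonneg le_out out zero by (intro exI[of _ \<pi>]) (auto simp: EF_def)
qed

lemma continuous_on_flows:
  "continuous_on UNIV (\<lambda>\<pi>. out_flow E \<pi> a)" "continuous_on UNIV (\<lambda>\<pi>. in_flow E \<pi> b)"
  unfolding out_flow_def in_flow_def by (intro continuous_on_sum continuous_on_product_coordinates)+

(* Tychonoff: the plans bounded by the supplies form a compact box, and by the finite case
   every finite family of exact-outflow constraints is satisfiable inside it. *)
lemma locally_finite_exact_out_flow: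
  fixes E :: "('v \<times> 'v) set" and \<mu> \<nu> :: "'v \<Rightarrow> real"
  assumes lf: "locally_finite_digraph E"
    and \<mu>: "\<forall>a. 0 \<le> \<mu> a" and \<nu>: "\<forall>b. 0 \<le> \<nu> b"
    and hall: "\<forall>A. (\<Sum>\<^sub>\<infinity>a\<in>A. ennreal (\<mu> a)) \<le> (\<Sum>\<^sub>\<infinity>b\<in>out_nbhd E A. ennreal (\<nu> b))"
  shows "\<exists>\<pi>. (\<forall>e. 0 \<le> \<pi> e) \<and> (\<forall>e. e \<notin> E \<longrightarrow> \<pi> e = 0) \<and>
             out_flow E \<pi> = \<mu> \<and> (\<forall>b. in_flow E \<pi> b \<le> \<nu> b)"
proof -
  define box where "box = (Pi\<^sub>E UNIV (\<lambda>e. {0..\<mu> (fst e)}) :: ('v \<times> 'v \<Rightarrow> real) set)"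
  define K where "K = box \<inter> (\<Inter>e\<in>-E. {\<pi>. \<pi> e = 0}) \<inter> (\<Inter>b. {\<pi>. in_flow E \<pi> b \<le> \<nu> b})"
  define Out where "Out a = {\<pi>. out_flow E \<pi> a = \<mu> a}" for a
  have "compactin (product_topology (\<lambda>_. euclidean) UNIV) box"
    unfolding box_def by (simp add: compactin_PiE)
  moreover have "closed {\<pi> :: 'v \<times> 'v \<Rightarrow> real. \<pi> e = 0}" for e
    by (intro closed_Collect_eq continuous_on_const continuous_on_product_coordinates)
  moreover have "closed {\<pi>. in_flow E \<pi> b \<le> \<nu> b}" for b
    by (intro closed_Collect_le continuous_on_flows continuous_on_const)
  ultimately have "compact K"
    unfolding K_def euclidean_product_topology compactin_euclidean_iff
    by (intro compact_Int_closed closed_INT) auto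
  moreover have "closed T" if "T \<in> range Out" for T
  proof -
    have "closed (Out a)" for a
      unfolding Out_def by (intro closed_Collect_eq continuous_on_flows continuous_on_const)
    with that show ?thesis by blast
  qed
  moreover have "K \<inter> \<Inter>\<F> \<noteq> {}" if "finite \<F>" "\<F> \<subseteq> range Out" for \<F>
  proof -
    from finite_subset_image[OF that] obtain A where "finite A" and A: "\<F> = Out ` A"
      by blast
    obtain \<pi> where \<pi>: "\<forall>e. 0 \<le> \<pi> e \<and> \<pi> e \<le> \<mu> (fst e)" "\<forall>e. e \<notin> E \<longrightarrow> \<pi> e = 0"
       "\<forall>a\<in>A. out_flow E \<pi> a = \<mu> a" "\<forall>b. in_flow E \<pi> b \<le> \<nu> b"
      using locally_finite_supply_plan[OF lf \<open>finite A\<close> \<mu> \<nu> hall] by blast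
    have "\<pi> \<in> box" using \<pi>(1) by (simp add: box_def PiE_iff)
    with \<pi>(2,4) have "\<pi> \<in> K" unfolding K_def by blast
    moreover have "\<pi> \<in> \<Inter>\<F>" using \<pi>(3) unfolding A Out_def by blast
    ultimately show ?thesis by blast
  qed
  ultimately have "K \<inter> \<Inter>(range Out) \<noteq> {}"
    by (rule compact_imp_fip)
  then obtain \<pi> where "\<pi> \<in> K" and "\<And>a. \<pi> \<in> Out a" by blast
  then have "\<pi> \<in> box" "\<forall>e. e \<notin> E \<longrightarrow> \<pi> e = 0" "\<forall>b. in_flow E \<pi> b \<le> \<nu> b" "out_flow E \<pi> = \<mu>"
    unfolding K_def Out_def by (auto simp: fun_eq_iff)
  moreover have "0 \<le> \<pi> e" if "\<pi> \<in> box" for e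
    using PiE_mem[OF that[unfolded box_def] UNIV_I, of e] by simp
  ultimately show ?thesis by blast
qed

lemma summable_on_ennreal_nonneg [simp]: "(f :: 'a \<Rightarrow> ennreal) summable_on A"
  by (rule nonneg_summable_on_complete) simp

lemma infsum_le_infsum_in_flow:
  assumes lf: "locally_finite_digraph E" and nonneg: "\<forall>e. 0 \<le> \<pi> e"
  shows "(\<Sum>\<^sub>\<infinity>a\<in>UNIV. ennreal (out_flow E \<pi> a)) \<le> (\<Sum>\<^sub>\<infinity>b\<in>UNIV. ennreal (in_flow E \<pi> b))"
proof (rule infsum_le_finite_sums)
  fix A :: "'a set" assume "finite A"
  define B where "B = out_nbhd E A"
  have "finite B" using finite_out_nbhd[OF lf \<open>finite A\<close>] by (simp add: B_def)
  have flow_nonneg: "0 \<le> out_flow E \<pi> a" "0 \<le> in_flow E \<pi> b" for a b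
    unfolding out_flow_def in_flow_def using nonneg by (simp_all add: sum_nonneg)
  have "sum (out_flow E \<pi>) A = (\<Sum>a\<in>A. \<Sum>b | b \<in> B \<and> (a, b) \<in> E. \<pi> (a, b))"
    unfolding out_flow_def by (intro sum.cong refl arg_cong2[where f = sum]) (auto simp: B_def out_nbhd_def)
  also have "\<dots> = (\<Sum>b\<in>B. \<Sum>a | a \<in> A \<and> (a, b) \<in> E. \<pi> (a, b))"
    by (rule sum.swap_restrict[OF \<open>finite A\<close> \<open>finite B\<close>])
  also have "\<dots> \<le> sum (in_flow E \<pi>) B"
    unfolding in_flow_def using lf nonneg
    by (intro sum_mono sum_mono2) (auto simp: locally_finite_digraph_def)
  finally have "(\<Sum>a\<in>A. ennreal (out_flow E \<pi> a)) \<le> (\<Sum>b\<in>B. ennreal (in_flow E \<pi> b))"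
    using flow_nonneg by (simp add: sum_ennreal ennreal_leI)
  also have "\<dots> = (\<Sum>\<^sub>\<infinity>b\<in>B. ennreal (in_flow E \<pi> b))"
    using \<open>finite B\<close> by simp
  also have "\<dots> \<le> (\<Sum>\<^sub>\<infinity>b\<in>UNIV. ennreal (in_flow E \<pi> b))"
    by (rule infsum_mono_neutral) auto
  finally show "(\<Sum>a\<in>A. ennreal (out_flow E \<pi> a)) \<le> (\<Sum>\<^sub>\<infinity>b\<in>UNIV. ennreal (in_flow E \<pi> b))" .
qed simp

lemma infsum_ennreal_le_imp_eq:
  fixes f g :: "'a \<Rightarrow> ennreal"
  assumes fin: "(\<Sum>\<^sub>\<infinity>x\<in>UNIV. f x) < \<infinity>"
    and sums: "(\<Sum>\<^sub>\<infinity>x\<in>UNIV. g x) \<le> (\<Sum>\<^sub>\<infinity>x\<in>UNIV. f x)"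
    and le: "\<And>x. f x \<le> g x"
  shows "f x = g x"
proof -
  have split: "(\<Sum>\<^sub>\<infinity>y\<in>UNIV. h y) = (\<Sum>\<^sub>\<infinity>y\<in>UNIV - {x}. h y) + h x" for h :: "'a \<Rightarrow> ennreal"
  proof -
    have "(\<Sum>\<^sub>\<infinity>y\<in>(UNIV - {x}) \<union> {x}. h y) = (\<Sum>\<^sub>\<infinity>y\<in>UNIV - {x}. h y) + (\<Sum>\<^sub>\<infinity>y\<in>{x}. h y)"
      by (rule infsum_Un_disjoint) simp_all
    then show ?thesis by (simp add: insert_absorb)
  qed
  have rest: "(\<Sum>\<^sub>\<infinity>y\<in>UNIV - {x}. f y) \<le> (\<Sum>\<^sub>\<infinity>y\<in>UNIV - {x}. g y)"
    by (rule infsum_mono) (simp_all add: le)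
  have "(\<Sum>\<^sub>\<infinity>y\<in>UNIV - {x}. g y) \<le> (\<Sum>\<^sub>\<infinity>y\<in>UNIV. g y)"
    by (rule infsum_mono_neutral) auto
  with sums fin have rest_fin: "(\<Sum>\<^sub>\<infinity>y\<in>UNIV - {x}. g y) \<noteq> \<infinity>" by auto
  have "(\<Sum>\<^sub>\<infinity>y\<in>UNIV - {x}. g y) + g x \<le> (\<Sum>\<^sub>\<infinity>y\<in>UNIV - {x}. g y) + f x"
    using sums rest add_right_mono order_trans unfolding split by blast
  with rest_fin have "g x \<le> f x" by (simp add: ennreal_add_left_cancel_le)
  with le[of x] show ?thesis by simp
qed

(* With equal finite total mass, the inflow inequalities can only hold with equality. *)
theorem hall_condition_imp_coupling:
  fixes E :: "('v \<times> 'v) set" and \<mu> \<nu> :: "'v \<Rightarrow> real"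
  assumes lf: "locally_finite_digraph E"
    and \<mu>: "\<forall>a. 0 \<le> \<mu> a" and \<nu>: "\<forall>b. 0 \<le> \<nu> b"
    and hall: "\<forall>A. (\<Sum>\<^sub>\<infinity>a\<in>A. ennreal (\<mu> a)) \<le> (\<Sum>\<^sub>\<infinity>b\<in>out_nbhd E A. ennreal (\<nu> b))"
    and mass: "(\<Sum>\<^sub>\<infinity>a\<in>UNIV. ennreal (\<mu> a)) = (\<Sum>\<^sub>\<infinity>b\<in>UNIV. ennreal (\<nu> b))"
    and fin: "(\<Sum>\<^sub>\<infinity>a\<in>UNIV. ennreal (\<mu> a)) < \<infinity>"
  shows "\<exists>\<pi>. coupling E \<mu> \<nu> \<pi>"
proof -
  obtain \<pi> where nonneg: "\<forall>e. 0 \<le> \<pi> e" and zero: "\<forall>e. e \<notin> E \<longrightarrow> \<pi> e = 0"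
    and out: "out_flow E \<pi> = \<mu>" and le: "\<forall>b. in_flow E \<pi> b \<le> \<nu> b"
    using locally_finite_exact_out_flow[OF lf \<mu> \<nu> hall] by blast
  have in_flow_nonneg: "0 \<le> in_flow E \<pi> b" for b
    unfolding in_flow_def using nonneg by (simp add: sum_nonneg)
  have le': "ennreal (in_flow E \<pi> b) \<le> ennreal (\<nu> b)" for b
    using le by (simp add: ennreal_leI)
  then have "(\<Sum>\<^sub>\<infinity>b\<in>UNIV. ennreal (in_flow E \<pi> b)) \<le> (\<Sum>\<^sub>\<infinity>b\<in>UNIV. ennreal (\<nu> b))"
    by (intro infsum_mono) simp_all
  then have "(\<Sum>\<^sub>\<infinity>b\<in>UNIV. ennreal (in_flow E \<pi> b)) < \<infinity>"
    using fin mass by simp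
  moreover have "(\<Sum>\<^sub>\<infinity>b\<in>UNIV. ennreal (\<nu> b)) \<le> (\<Sum>\<^sub>\<infinity>b\<in>UNIV. ennreal (in_flow E \<pi> b))"
    using infsum_le_infsum_in_flow[OF lf nonneg] out mass by simp
  ultimately have "ennreal (in_flow E \<pi> b) = ennreal (\<nu> b)" for b
    using le' by (rule infsum_ennreal_le_imp_eq)
  then have "in_flow E \<pi> = \<nu>"
    using in_flow_nonneg \<nu> by (simp add: fun_eq_iff)
  with nonneg zero out show ?thesis
    unfolding coupling_def by blast
qed


section \<open>Gluing couplings along paths\<close>

definition path_marginal :: "('v \<times> 'v) set \<Rightarrow> nat \<Rightarrow> ('v list \<Rightarrow> real) \<Rightarrow> nat \<Rightarrow> 'v \<Rightarrow> real" where
  "path_marginal E n \<alpha> j v = (\<Sum>p | p \<in> paths E n \<and> p ! j = v. \<alpha> p)"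

lemma length_paths: "p \<in> paths E n \<Longrightarrow> length p = n"
  by (simp add: paths_def)

lemma snoc_in_paths_iff:
  assumes "1 \<le> n" "length p = n"
  shows "p @ [u] \<in> paths E (Suc n) \<longleftrightarrow> p \<in> paths E n \<and> (last p, u) \<in> E"
proof -
  have step: "((p @ [u]) ! i, (p @ [u]) ! Suc i) = (if Suc i < n then (p ! i, p ! Suc i) else (last p, u))"
    if "Suc i < Suc n" for i
  proof (cases "Suc i < n")
    case False
    with that have "i = n - 1" by simp
    then show ?thesis using assms False by (simp add: nth_append, subst last_conv_nth) auto
  qed (use assms in \<open>simp add: nth_append\<close>)
  have "(\<forall>i. Suc i < Suc n \<longrightarrow> ((p @ [u]) ! i, (p @ [u]) ! Suc i) \<in> E) \<longleftrightarrow>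
        (\<forall>i. Suc i < n \<longrightarrow> (p ! i, p ! Suc i) \<in> E) \<and> (last p, u) \<in> E" (is "?L \<longleftrightarrow> ?R")
  proof
    assume L: ?L
    have "(last p, u) \<in> E" using L[rule_format, of "n - 1"] step[of "n - 1"] assms(1) by simp
    moreover have "(p ! i, p ! Suc i) \<in> E" if "Suc i < n" for i
      using L[rule_format, of i] step[of i] that by simp
    ultimately show ?R by blast
  next
    assume ?R
    then show ?L using step by (metis (full_types))
  qed
  then show ?thesis using assms(2) by (simp add: paths_def)
qed

lemma last_paths: "p \<in> paths E n \<Longrightarrow> 1 \<le> n \<Longrightarrow> last p = p ! (n - 1)"
  by (subst last_conv_nth) (auto simp: paths_def)

lemma paths_Suc_eq:
  assumes "1 \<le> n"
  shows "paths E (Suc n) = (\<lambda>(p, u). p @ [u]) ` {(p, u). p \<in> paths E n \<and> (last p, u) \<in> E}"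
proof (intro equalityI subsetI)
  fix q assume q: "q \<in> paths E (Suc n)"
  then have "length q = Suc n" by (simp add: paths_def)
  then have q_snoc: "q = butlast q @ [last q]" and "length (butlast q) = n"
    by (auto simp del: length_greater_0_conv intro: append_butlast_last_id[symmetric])
  with q have "butlast q \<in> paths E n" "(last (butlast q), last q) \<in> E"
    using snoc_in_paths_iff[OF assms, of "butlast q" "last q" E] by auto
  with q_snoc show "q \<in> (\<lambda>(p, u). p @ [u]) ` {(p, u). p \<in> paths E n \<and> (last p, u) \<in> E}"
    by (intro image_eqI[of _ _ "(butlast q, last q)"]) auto
qed (auto simp: snoc_in_paths_iff[OF assms] length_paths)

lemma sum_paths_Suc:
  fixes E :: "('v \<times> 'v) set" and f :: "'v list \<Rightarrow> 'b::comm_monoid_add"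
  assumes "1 \<le> n"
  shows "(\<Sum>q | q \<in> paths E (Suc n) \<and> P q. f q) =
         (\<Sum>(p, u) | p \<in> paths E n \<and> (last p, u) \<in> E \<and> P (p @ [u]). f (p @ [u]))"
proof -
  have image: "{q. q \<in> paths E (Suc n) \<and> P q} =
        (\<lambda>(p, u). p @ [u]) ` {(p, u). p \<in> paths E n \<and> (last p, u) \<in> E \<and> P (p @ [u])}"
    unfolding paths_Suc_eq[OF assms] by auto
  have inj: "inj_on (\<lambda>(p, u). p @ [u]) A" for A :: "('v list \<times> 'v) set"
    by (auto simp: inj_on_def)
  show ?thesis
    unfolding image using sum.reindex[OF inj] by (simp add: comp_def case_prod_unfold)
qed

lemma finite_paths_through:
  assumes lf: "locally_finite_digraph E" and "j < n"
  shows "finite {p \<in> paths E n. p ! j = v}"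
  using \<open>j < n\<close>
proof (induction n arbitrary: j v)
  case (Suc n)
  show ?case
  proof (cases "n = 0")
    case True
    with Suc.prems have "{p \<in> paths E (Suc n). p ! j = v} = {[v]}"
      by (auto simp: paths_def length_Suc_conv)
    then show ?thesis by simp
  next
    case False
    then have "1 \<le> n" by simp
    show ?thesis
    proof (cases "j < n")
      case True
      have "{q \<in> paths E (Suc n). q ! j = v} \<subseteq>
            (\<lambda>(p, u). p @ [u]) ` (SIGMA p:{p \<in> paths E n. p ! j = v}. {u. (last p, u) \<in> E})"
        using True by (auto simp: paths_Suc_eq[OF \<open>1 \<le> n\<close>] nth_append length_paths)
      moreover have "finite (SIGMA p:{p \<in> paths E n. p ! j = v}. {u. (last p, u) \<in> E})"
        using Suc.IH[OF True] lf by (auto simp: locally_finite_digraph_def)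
      ultimately show ?thesis using finite_surj by blast
    next
      case False
      with Suc.prems have "j = n" by simp
      have "{q \<in> paths E (Suc n). q ! j = v} \<subseteq>
            (\<lambda>(x, p). p @ [v]) ` (SIGMA x:{x. (x, v) \<in> E}. {p \<in> paths E n. p ! (n - 1) = x})"
        using \<open>j = n\<close> \<open>1 \<le> n\<close>
        by (auto simp: paths_Suc_eq[OF \<open>1 \<le> n\<close>] nth_append length_paths last_paths image_iff)
      moreover have "finite (SIGMA x:{x. (x, v) \<in> E}. {p \<in> paths E n. p ! (n - 1) = x})"
        using Suc.IH[of "n - 1"] \<open>1 \<le> n\<close> lf by (auto simp: locally_finite_digraph_def)
      ultimately show ?thesis using finite_surj by blast
    qed
  qed
qed simp

(* If the last-position marginal of alpha is mu, every path ending at x with mu x = 0 has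
   weight 0, so the junk value of the division by zero is harmless. *)
definition extend_weight ::
    "('v \<times> 'v \<Rightarrow> real) \<Rightarrow> ('v \<Rightarrow> real) \<Rightarrow> ('v list \<Rightarrow> real) \<Rightarrow> 'v list \<Rightarrow> real" where
  "extend_weight \<pi> \<mu> \<alpha> q = \<alpha> (butlast q) * \<pi> (last (butlast q), last q) / \<mu> (last (butlast q))"

lemma extend_weight_snoc [simp]: "extend_weight \<pi> \<mu> \<alpha> (p @ [u]) = \<alpha> p * \<pi> (last p, u) / \<mu> (last p)"
  by (simp add: extend_weight_def)

lemma sum_extend_weight_fiber:
  assumes "coupling E \<mu> \<nu> \<pi>" and "\<mu> (last p) = 0 \<Longrightarrow> \<alpha> p = 0"
  shows "(\<Sum>u | (last p, u) \<in> E. extend_weight \<pi> \<mu> \<alpha> (p @ [u])) = \<alpha> p"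
proof -
  have "(\<Sum>u | (last p, u) \<in> E. extend_weight \<pi> \<mu> \<alpha> (p @ [u])) = \<alpha> p * out_flow E \<pi> (last p) / \<mu> (last p)"
    by (simp add: out_flow_def sum_distrib_left sum_divide_distrib)
  also have "\<dots> = \<alpha> p * \<mu> (last p) / \<mu> (last p)"
    using assms(1) by (simp add: coupling_def)
  also have "\<dots> = \<alpha> p"
    using assms(2) by (cases "\<mu> (last p) = 0") auto
  finally show ?thesis .
qed

lemma path_weight_vanishes:
  assumes "locally_finite_digraph E" "j < n" "\<forall>p. 0 \<le> \<alpha> p"
    and "path_marginal E n \<alpha> j (p ! j) = 0" "p \<in> paths E n"
  shows "\<alpha> p = 0"
proof -
  have "\<forall>q \<in> {q \<in> paths E n. q ! j = p ! j}. \<alpha> q = 0"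
    using assms(3,4) finite_paths_through[OF assms(1,2)]
    by (subst sum_nonneg_eq_0_iff[symmetric]) (auto simp: path_marginal_def)
  with assms(5) show ?thesis by blast
qed

lemma path_marginal_extend_weight_prefix:
  assumes lf: "locally_finite_digraph E" and "1 \<le> n" and \<pi>: "coupling E \<mu> \<nu> \<pi>"
    and \<alpha>: "\<forall>p. 0 \<le> \<alpha> p" and marginal: "path_marginal E n \<alpha> (n - 1) = \<mu>" and "j < n"
  shows "path_marginal E (Suc n) (extend_weight \<pi> \<mu> \<alpha>) j = path_marginal E n \<alpha> j"
proof
  fix v
  define P where "P = {p \<in> paths E n. p ! j = v}"
  have vanish: "\<alpha> p = 0" if "p \<in> P" "\<mu> (last p) = 0" for p
    using that path_weight_vanishes[OF lf _ \<alpha>, of "n - 1" n p] marginal \<open>1 \<le> n\<close>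
    by (simp add: P_def last_paths[of _ E n])
  have "finite P" "finite {u. (last p, u) \<in> E}" for p
    using finite_paths_through[OF lf \<open>j < n\<close>] lf by (simp_all add: P_def locally_finite_digraph_def)
  have "path_marginal E (Suc n) (extend_weight \<pi> \<mu> \<alpha>) j v =
      (\<Sum>(p, u) | p \<in> paths E n \<and> (last p, u) \<in> E \<and> (p @ [u]) ! j = v. extend_weight \<pi> \<mu> \<alpha> (p @ [u]))"
    unfolding path_marginal_def by (rule sum_paths_Suc[OF \<open>1 \<le> n\<close>])
  also have "{(p, u). p \<in> paths E n \<and> (last p, u) \<in> E \<and> (p @ [u]) ! j = v} = (SIGMA p:P. {u. (last p, u) \<in> E})"
    using \<open>j < n\<close> by (auto simp: P_def nth_append length_paths)
  also have "(\<Sum>(p, u)\<in>\<dots>. extend_weight \<pi> \<mu> \<alpha> (p @ [u])) =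
      (\<Sum>p\<in>P. \<Sum>u | (last p, u) \<in> E. extend_weight \<pi> \<mu> \<alpha> (p @ [u]))"
    using \<open>finite P\<close> \<open>finite {u. (last _, u) \<in> E}\<close> by (simp add: sum.Sigma)
  also have "\<dots> = (\<Sum>p\<in>P. \<alpha> p)"
    using vanish by (intro sum.cong refl sum_extend_weight_fiber[OF \<pi>]) auto
  finally show "path_marginal E (Suc n) (extend_weight \<pi> \<mu> \<alpha>) j v = path_marginal E n \<alpha> j v"
    by (simp add: path_marginal_def P_def)
qed

lemma path_marginal_extend_weight_last:
  assumes lf: "locally_finite_digraph E" and "1 \<le> n" and \<pi>: "coupling E \<mu> \<nu> \<pi>"
    and \<alpha>: "\<forall>p. 0 \<le> \<alpha> p" and marginal: "path_marginal E n \<alpha> (n - 1) = \<mu>"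
  shows "path_marginal E (Suc n) (extend_weight \<pi> \<mu> \<alpha>) n = \<nu>"
proof
  fix v
  define X where "X = {x. (x, v) \<in> E}"
  define S where "S = {p \<in> paths E n. last p \<in> X}"
  have "finite X" using lf by (simp add: X_def locally_finite_digraph_def)
  have "S = (\<Union>x\<in>X. {p \<in> paths E n. p ! (n - 1) = x})"
    using \<open>1 \<le> n\<close> by (auto simp: S_def last_paths[of _ E n])
  then have "finite S"
    using \<open>finite X\<close> finite_paths_through[OF lf, of "n - 1" n] \<open>1 \<le> n\<close> by simp
  have "path_marginal E (Suc n) (extend_weight \<pi> \<mu> \<alpha>) n v =
      (\<Sum>(p, u) | p \<in> paths E n \<and> (last p, u) \<in> E \<and> (p @ [u]) ! n = v. extend_weight \<pi> \<mu> \<alpha> (p @ [u]))"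
    unfolding path_marginal_def by (rule sum_paths_Suc[OF \<open>1 \<le> n\<close>])
  also have "\<dots> = (\<Sum>p\<in>S. extend_weight \<pi> \<mu> \<alpha> (p @ [v]))"
    by (rule sum.reindex_cong[where l = "\<lambda>p. (p, v)"]) (auto simp: S_def X_def inj_on_def nth_append length_paths)
  also have "\<dots> = (\<Sum>x\<in>X. \<Sum>p | p \<in> S \<and> last p = x. extend_weight \<pi> \<mu> \<alpha> (p @ [v]))"
    using \<open>finite S\<close> \<open>finite X\<close> by (intro sum.group[symmetric]) (auto simp: S_def)
  also have "\<dots> = (\<Sum>x\<in>X. \<pi> (x, v))"
  proof (rule sum.cong[OF refl])
    fix x assume "x \<in> X"
    then have "{p. p \<in> S \<and> last p = x} = {p \<in> paths E n. p ! (n - 1) = x}"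
      using \<open>1 \<le> n\<close> by (auto simp: S_def last_paths[of _ E n])
    then have "path_marginal E n \<alpha> (n - 1) x = (\<Sum>p | p \<in> S \<and> last p = x. \<alpha> p)"
      by (simp add: path_marginal_def)
    moreover have "(\<Sum>p | p \<in> S \<and> last p = x. extend_weight \<pi> \<mu> \<alpha> (p @ [v])) =
        (\<Sum>p | p \<in> S \<and> last p = x. \<alpha> p * \<pi> (x, v) / \<mu> x)"
      by (rule sum.cong) auto
    ultimately have "(\<Sum>p | p \<in> S \<and> last p = x. extend_weight \<pi> \<mu> \<alpha> (p @ [v])) =
        path_marginal E n \<alpha> (n - 1) x * \<pi> (x, v) / \<mu> x"
      by (simp add: sum_distrib_right sum_divide_distrib)
    also have "\<dots> = \<pi> (x, v)"
      using marginal coupling_le_out[OF \<pi> lf, of x v] coupling_nonneg(1)[OF \<pi>, of "(x, v)"]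
      by (cases "\<mu> x = 0") auto
    finally show "(\<Sum>p | p \<in> S \<and> last p = x. extend_weight \<pi> \<mu> \<alpha> (p @ [v])) = \<pi> (x, v)" .
  qed
  also have "\<dots> = \<nu> v"
    using coupling_flows(2)[OF \<pi>, of v] by (simp add: X_def in_flow_def)
  finally show "path_marginal E (Suc n) (extend_weight \<pi> \<mu> \<alpha>) n v = \<nu> v" .
qed

lemma exists_path_weight:
  assumes lf: "locally_finite_digraph E" and w1: "\<forall>v. 0 \<le> w 1 v"
    and \<pi>: "\<forall>i\<in>{1..<N}. coupling E (w i) (w (Suc i)) (\<pi> i)"
    and "1 \<le> n" "n \<le> N"
  shows "\<exists>\<alpha>. (\<forall>p. 0 \<le> \<alpha> p) \<and> (\<forall>j<n. path_marginal E n \<alpha> j = w (Suc j))"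
  using \<open>1 \<le> n\<close> \<open>n \<le> N\<close>
proof (induction n rule: nat_induct_at_least)
  case base
  have "{p \<in> paths E 1. p ! 0 = v} = {[v]}" for v
    by (auto simp: paths_def length_Suc_conv)
  then have "path_marginal E 1 (\<lambda>p. w 1 (hd p)) 0 = w 1"
    by (simp add: path_marginal_def fun_eq_iff)
  then show ?case
    using w1 by (intro exI[of _ "\<lambda>p. w 1 (hd p)"]) auto
next
  case (Suc n)
  then obtain \<alpha> where \<alpha>: "\<forall>p. 0 \<le> \<alpha> p" "\<forall>j<n. path_marginal E n \<alpha> j = w (Suc j)"
    by auto
  have \<pi>n: "coupling E (w n) (w (Suc n)) (\<pi> n)"
    using \<pi> Suc by auto
  have "path_marginal E n \<alpha> (n - 1) = w (Suc (n - 1))"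
    using \<alpha>(2) \<open>1 \<le> n\<close> by simp
  then have marginal: "path_marginal E n \<alpha> (n - 1) = w n"
    using \<open>1 \<le> n\<close> by simp
  let ?\<alpha>' = "extend_weight (\<pi> n) (w n) \<alpha>"
  have "0 \<le> ?\<alpha>' q" for q
    using \<alpha>(1) coupling_nonneg[OF \<pi>n] by (simp add: extend_weight_def)
  moreover have "path_marginal E (Suc n) ?\<alpha>' j = w (Suc j)" if "j < Suc n" for j
  proof (cases "j < n")
    case True
    then show ?thesis
      using path_marginal_extend_weight_prefix[OF lf \<open>1 \<le> n\<close> \<pi>n \<alpha>(1) marginal] \<alpha>(2) by simp
  next
    case False
    with that have "j = n" by simp
    then show ?thesis
      using path_marginal_extend_weight_last[OF lf \<open>1 \<le> n\<close> \<pi>n \<alpha>(1) marginal] by simp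
  qed
  ultimately show ?case by blast
qed

lemma infsum_path_marginal:
  assumes "locally_finite_digraph E" "j < n" "\<forall>p. 0 \<le> \<alpha> p"
  shows "(\<Sum>\<^sub>\<infinity>p\<in>{p \<in> paths E n. p ! j = v}. ennreal (\<alpha> p)) = ennreal (path_marginal E n \<alpha> j v)"
proof -
  have "(\<Sum>\<^sub>\<infinity>p\<in>{p \<in> paths E n. p ! j = v}. ennreal (\<alpha> p)) = (\<Sum>p\<in>{p \<in> paths E n. p ! j = v}. ennreal (\<alpha> p))"
    by (rule infsum_finite[OF finite_paths_through[OF assms(1,2)]])
  also have "\<dots> = ennreal (path_marginal E n \<alpha> j v)"
    unfolding path_marginal_def using assms(3) by (intro sum_ennreal) simp
  finally show ?thesis .
qed

lemma exists_coupling_chain: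
  fixes E :: "('v \<times> 'v) set" and w :: "nat \<Rightarrow> 'v \<Rightarrow> real"
  assumes lf: "locally_finite_digraph E"
    and nonneg: "\<forall>i\<in>{1..N}. \<forall>v. w i v \<ge> 0"
    and hall: "\<forall>A i. 1 \<le> i \<and> i < N \<longrightarrow>
           (\<Sum>\<^sub>\<infinity>a\<in>A. ennreal (w i a)) \<le> (\<Sum>\<^sub>\<infinity>b\<in>out_nbhd E A. ennreal (w (Suc i) b))"
    and ends: "(\<Sum>\<^sub>\<infinity>v\<in>UNIV. ennreal (w 1 v)) = (\<Sum>\<^sub>\<infinity>v\<in>UNIV. ennreal (w N v))"
    and fin: "(\<Sum>\<^sub>\<infinity>v\<in>UNIV. ennreal (w 1 v)) < \<infinity>"
  shows "\<exists>\<pi>. \<forall>i\<in>{1..<N}. coupling E (w i) (w (Suc i)) (\<pi> i)"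
proof -
  define mass where "mass i = (\<Sum>\<^sub>\<infinity>v\<in>UNIV. ennreal (w i v))" for i
  have "mass i \<le> mass (Suc i)" if "i \<in> {1..<N}" for i
  proof -
    have "mass i \<le> (\<Sum>\<^sub>\<infinity>b\<in>out_nbhd E UNIV. ennreal (w (Suc i) b))"
      using hall that unfolding mass_def by simp
    also have "\<dots> \<le> mass (Suc i)"
      unfolding mass_def by (rule infsum_mono_neutral) auto
    finally show ?thesis .
  qed
  then have mass: "mass i = mass 1" if "i \<in> {1..N}" for i
    using lift_Suc_mono_le_ivl[of "{1..<N}" mass 1 i] lift_Suc_mono_le_ivl[of "{1..<N}" mass i N]
      that ends unfolding mass_def by (simp add: subset_eq order_antisym)
  have "\<forall>i\<in>{1..<N}. \<exists>\<pi>. coupling E (w i) (w (Suc i)) \<pi>"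
  proof
    fix i assume "i \<in> {1..<N}"
    then show "\<exists>\<pi>. coupling E (w i) (w (Suc i)) \<pi>"
      using nonneg hall fin mass[of i] mass[of "Suc i"]
      by (intro hall_condition_imp_coupling[OF lf]) (simp_all add: mass_def)
  qed
  then show ?thesis by (rule bchoice)
qed

theorem proposition2p1:
  fixes E :: "('v \<times> 'v) set" and N :: nat and w :: "nat \<Rightarrow> 'v \<Rightarrow> real"
  assumes "bounded_degree E"
    and "N \<ge> 2"
    and "\<forall>i\<in>{1..N}. \<forall>v. w i v \<ge> 0"
    and "\<forall>A i. 1 \<le> i \<and> i < N \<longrightarrow>
           (\<Sum>\<^sub>\<infinity>a\<in>A. ennreal (w i a)) \<le> (\<Sum>\<^sub>\<infinity>b\<in>out_nbhd E A. ennreal (w (Suc i) b))"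
    and "(\<Sum>\<^sub>\<infinity>v\<in>UNIV. ennreal (w 1 v)) = (\<Sum>\<^sub>\<infinity>v\<in>UNIV. ennreal (w N v))"
    and "(\<Sum>\<^sub>\<infinity>v\<in>UNIV. ennreal (w 1 v)) < \<infinity>"
  shows "\<exists>\<alpha> :: 'v list \<Rightarrow> real. (\<forall>p\<in>paths E N. \<alpha> p \<ge> 0) \<and>
           (\<forall>i\<in>{1..N}. \<forall>v. ennreal (w i v) =
              (\<Sum>\<^sub>\<infinity>p\<in>{p\<in>paths E N. p ! (i - 1) = v}. ennreal (\<alpha> p)))"
proof -
  have lf: "locally_finite_digraph E"
    using assms(1) by (rule bounded_degree_imp_locally_finite)
  obtain \<pi> where "\<forall>i\<in>{1..<N}. coupling E (w i) (w (Suc i)) (\<pi> i)"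
    using exists_coupling_chain[OF lf assms(3-6)] by blast
  then obtain \<alpha> where \<alpha>: "\<forall>p. 0 \<le> \<alpha> p" and marginals: "\<forall>j<N. path_marginal E N \<alpha> j = w (Suc j)"
    using exists_path_weight[OF lf, of w N \<pi> N] assms(2,3) by auto
  have "ennreal (w i v) = (\<Sum>\<^sub>\<infinity>p\<in>{p \<in> paths E N. p ! (i - 1) = v}. ennreal (\<alpha> p))"
    if "i \<in> {1..N}" for i v
  proof -
    have "i - 1 < N" "Suc (i - 1) = i" using that by auto
    then show ?thesis
      using marginals infsum_path_marginal[OF lf _ \<alpha>, of "i - 1" N v] by simp
  qed
  with \<alpha> show ?thesis by blast
qed

end
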